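(* For every positive integer $t$ there exist positive integers $t'$ and $u$ such that every semilinear graph of complexity $t$ is semilinear* of complexity $(t',u)$.
   Context: A function $f:\mathbb{R}^{m}\to\mathbb{R}$ is linear if $f(\mathbf{x})=b+\sum_{i=1}^m a_i\mathbf{x}(i)$ for some reals $a_1,\dots,a_m,b$. A finite simple graph $G$ is semilinear of complexity $t$ if $V(G)\subset\mathbb{R}^d$ for some positive integer $d$, and there are $t$ linear functions $f_1,\dots,f_t:\mathbb{R}^d\times\mathbb{R}^d\to\mathbb{R}$ and a Boolean function $\phi:\{\mathrm{F},\mathrm{T}\}^{3t}\to\{\mathrm{F},\mathrm{T}\}$ such that for distinct $\mathbf{x},\mathbf{y}\in V(G)$, $\{\mathbf{x},\mathbf{y}\}$ is an edge iff $\phi\big(\{f_i(\mathbf{x},\mathbf{y})<0,\ f_i(\mathbf{x},\mathbf{y})\leq 0,\ f_i(\mathbf{x},\mathbf{y})=0\}_{i\in[t]}\big)=\mathrm{T}$ (assumed symmetric in $\mathbf{x},\mathbf{y}$). $G$ is semilinear* of complexity $(t,u)$ if $V(G)\subset\mathbb{R}^d$ and there are $tu$ linear functions $f_{i,j}:\mathbb{R}^d\times\mathbb{R}^d\to\mathbb{R}$, $(i,j)\in[u]\times[t]$, such that for distinct $\mathbf{x},\mathbf{y}\in V(G)$, $\{\mathbf{x},\mathbf{y}\}$ is an edge iff $\bigvee_{i\in[u]}\bigwedge_{j\in[t]}\{f_{i,j}(\mathbf{x},\mathbf{y})<0\}$ is true (assumed symmetric in $\mathbf{x},\mathbf{y}$).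 *)

theory Defs
  imports Main Complex_Main
begin

text \<open>Points of R^d are real lists of length d.  A linear function
  f : R^d x R^d -> R is given by a constant b and coefficient vectors a, c:
  f(x,y) = b + sum_{i<d} a_i x(i) + sum_{i<d} c_i y(i).\<close>

type_synonym linfun = "real \<times> (nat \<Rightarrow> real) \<times> (nat \<Rightarrow> real)"

definition lin_eval :: "nat \<Rightarrow> linfun \<Rightarrow> real list \<Rightarrow> real list \<Rightarrow> real" where
  "lin_eval d f x y =
     fst f + (\<Sum>i<d. fst (snd f) i * x ! i) + (\<Sum>i<d. snd (snd f) i * y ! i)"

definition simple_graph :: "'a set \<Rightarrow> ('a \<Rightarrow> 'a \<Rightarrow> bool) \<Rightarrow> bool" where
  "simple_graph V E \<longleftrightarrow> finite V \<and>
     (\<forall>x y. E x y \<longrightarrow> x \<in> V \<and> y \<in> V \<and> x \<noteq> y \<and> E y x)"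

definition sign_pattern :: "nat \<Rightarrow> nat \<Rightarrow> (nat \<Rightarrow> linfun) \<Rightarrow> real list \<Rightarrow> real list \<Rightarrow> bool list" where
  "sign_pattern d t f x y =
     concat (map (\<lambda>i. [lin_eval d (f i) x y < 0, lin_eval d (f i) x y \<le> 0, lin_eval d (f i) x y = 0]) [0..<t])"

definition semilinear :: "nat \<Rightarrow> real list set \<Rightarrow> (real list \<Rightarrow> real list \<Rightarrow> bool) \<Rightarrow> bool" where
  "semilinear t V E \<longleftrightarrow>
     (\<exists>d::nat. d > 0 \<and> (\<forall>x\<in>V. length x = d) \<and>
       (\<exists>(f :: nat \<Rightarrow> linfun) (\<phi> :: bool list \<Rightarrow> bool).
          \<forall>x\<in>V. \<forall>y\<in>V. x \<noteq> y \<longrightarrow> (E x y \<longleftrightarrow> \<phi> (sign_pattern d t f x y))))"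

definition semilinear_star :: "nat \<Rightarrow> nat \<Rightarrow> real list set \<Rightarrow> (real list \<Rightarrow> real list \<Rightarrow> bool) \<Rightarrow> bool" where
  "semilinear_star t u V E \<longleftrightarrow>
     (\<exists>d::nat. d > 0 \<and> (\<forall>x\<in>V. length x = d) \<and>
       (\<exists>f :: nat \<Rightarrow> nat \<Rightarrow> linfun.
          \<forall>x\<in>V. \<forall>y\<in>V. x \<noteq> y \<longrightarrow>
            (E x y \<longleftrightarrow> (\<exists>i<u. \<forall>j<t. lin_eval d (f i j) x y < 0))))"

end

theory Submission
  imports Defs
begin

text \<open>Since V is finite, there is a gap e > 0 below which no nonzero value f_k(x,y) falls.
  Then each sign condition on f_k is a conjunction of two strict inequalities:
  f < 0 iff (f < 0 and -1 < 0), f > 0 iff (-f < 0 and -1 < 0), and f = 0 iff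
  (f - e < 0 and -f - e < 0).  Writing phi as a disjunction over the 3^t sign vectors
  it accepts, each disjunct becomes a conjunction of 2t strict linear inequalities;
  rejected sign vectors get the unsatisfiable clause 1 < 0.\<close>

definition lin_const :: "real \<Rightarrow> linfun" where
  "lin_const c = (c, \<lambda>_. 0, \<lambda>_. 0)"

definition lin_scale :: "real \<Rightarrow> linfun \<Rightarrow> linfun" where
  "lin_scale a f = (a * fst f, \<lambda>i. a * fst (snd f) i, \<lambda>i. a * snd (snd f) i)"

definition lin_add_const :: "real \<Rightarrow> linfun \<Rightarrow> linfun" where
  "lin_add_const c f = (fst f + c, snd f)"

lemma lin_eval_lin_const [simp]: "lin_eval d (lin_const c) x y = c"
  unfolding lin_eval_def lin_const_def by simp

lemma lin_eval_lin_scale [simp]: "lin_eval d (lin_scale a f) x y = a * lin_eval d f x y"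
  unfolding lin_eval_def lin_scale_def
  by (simp add: distrib_left sum_distrib_left mult.assoc)

lemma lin_eval_lin_add_const [simp]: "lin_eval d (lin_add_const c f) x y = lin_eval d f x y + c"
  unfolding lin_eval_def lin_add_const_def by simp

lemma finite_nonzero_abs_lower_bound:
  fixes A :: "real set"
  assumes "finite A"
  obtains e where "e > 0" "\<And>a. a \<in> A \<Longrightarrow> a \<noteq> 0 \<Longrightarrow> e \<le> \<bar>a\<bar>"
proof (cases "abs ` A - {0} = {}")
  case True
  then show ?thesis using that[of 1] by fastforce
next
  case False
  define m where "m = Min (abs ` A - {0})"
  have fin: "finite (abs ` A - {0})" using assms by simp
  have "m \<in> abs ` A - {0}" unfolding m_def using fin False by (rule Min_in)
  then have "m > 0" by auto
  moreover have "m \<le> \<bar>a\<bar>" if "a \<in> A" "a \<noteq> 0" for a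
    unfolding m_def using fin that by (intro Min_le) auto
  ultimately show ?thesis by (rule that)
qed

definition sign_vector :: "nat \<Rightarrow> nat \<Rightarrow> (nat \<Rightarrow> linfun) \<Rightarrow> real list \<Rightarrow> real list \<Rightarrow> real list" where
  "sign_vector d t f x y = map (\<lambda>k. sgn (lin_eval d (f k) x y)) [0..<t]"

definition pattern_of_signs :: "real list \<Rightarrow> bool list" where
  "pattern_of_signs s = concat (map (\<lambda>\<sigma>. [\<sigma> < 0, \<sigma> \<le> 0, \<sigma> = 0]) s)"

lemma sign_pattern_eq_pattern_of_signs:
  "sign_pattern d t f x y = pattern_of_signs (sign_vector d t f x y)"
  unfolding sign_pattern_def pattern_of_signs_def sign_vector_def
  by (simp add: comp_def sgn_less sgn_le_0_iff sgn_0_0)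

lemma sign_vector_in_n_lists: "sign_vector d t f x y \<in> set (List.n_lists t [-1, 0, 1])"
  by (auto simp: set_n_lists sign_vector_def sgn_real_def)

definition sign_clause :: "real \<Rightarrow> linfun \<Rightarrow> real \<Rightarrow> nat \<Rightarrow> linfun" where
  "sign_clause e f \<sigma> b =
     (if \<sigma> = 0 then lin_add_const (- e) (lin_scale (if b = 0 then 1 else -1) f)
      else if b = 0 then lin_scale (- \<sigma>) f else lin_const (-1))"

lemma sign_clause_iff:
  assumes "\<sigma> \<in> {-1, 0, 1}" "e > 0" "lin_eval d f x y \<noteq> 0 \<Longrightarrow> e \<le> \<bar>lin_eval d f x y\<bar>"
  shows "(lin_eval d (sign_clause e f \<sigma> 0) x y < 0 \<and> lin_eval d (sign_clause e f \<sigma> 1) x y < 0)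
           \<longleftrightarrow> sgn (lin_eval d f x y) = \<sigma>"
  using assms by (auto simp: sign_clause_def sgn_real_def)

lemma all_less_double_iff:
  "(\<forall>j < 2 * t. P (j div 2) (j mod 2)) \<longleftrightarrow> (\<forall>k < t. P k 0 \<and> P k (1::nat))"
proof safe
  fix k assume "\<forall>j < 2 * t. P (j div 2) (j mod 2)" "k < t"
  then show "P k 0" "P k 1"
    by (auto dest: spec[of _ "2 * k"] spec[of _ "2 * k + 1"])
next
  fix j :: nat assume "\<forall>k < t. P k 0 \<and> P k 1" "j < 2 * t"
  then show "P (j div 2) (j mod 2)"
    by (cases "even j") (auto elim!: evenE oddE)
qed

definition dnf_clause ::
    "real \<Rightarrow> (nat \<Rightarrow> linfun) \<Rightarrow> (bool list \<Rightarrow> bool) \<Rightarrow> real list \<Rightarrow> nat \<Rightarrow> linfun" where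
  "dnf_clause e f \<phi> s j =
     (if \<phi> (pattern_of_signs s) then sign_clause e (f (j div 2)) (s ! (j div 2)) (j mod 2)
      else lin_const 1)"

lemma dnf_clause_iff:
  assumes "t > 0" "s \<in> set (List.n_lists t [-1, 0, 1])" "e > 0"
    and gap: "\<And>k. k < t \<Longrightarrow> lin_eval d (f k) x y \<noteq> 0 \<Longrightarrow> e \<le> \<bar>lin_eval d (f k) x y\<bar>"
  shows "(\<forall>j < 2 * t. lin_eval d (dnf_clause e f \<phi> s j) x y < 0)
           \<longleftrightarrow> \<phi> (pattern_of_signs s) \<and> sign_vector d t f x y = s"
proof (cases "\<phi> (pattern_of_signs s)")
  case True
  have s: "length s = t" "\<And>k. k < t \<Longrightarrow> s ! k \<in> {-1, 0, 1}"
    using assms(2) by (auto simp: set_n_lists dest!: nth_mem)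
  have "(\<forall>j < 2 * t. lin_eval d (dnf_clause e f \<phi> s j) x y < 0)
          \<longleftrightarrow> (\<forall>k < t. lin_eval d (sign_clause e (f k) (s ! k) 0) x y < 0
                      \<and> lin_eval d (sign_clause e (f k) (s ! k) 1) x y < 0)"
    using True all_less_double_iff[where P = "\<lambda>k b. lin_eval d (sign_clause e (f k) (s ! k) b) x y < 0"]
    by (simp add: dnf_clause_def)
  also have "\<dots> \<longleftrightarrow> (\<forall>k < t. sgn (lin_eval d (f k) x y) = s ! k)"
    using sign_clause_iff[OF s(2) \<open>e > 0\<close> gap] by blast
  also have "\<dots> \<longleftrightarrow> sign_vector d t f x y = s"
    using s(1) by (auto simp: sign_vector_def list_eq_iff_nth_eq)
  finally show ?thesis using True by simp
next
  case False
  then show ?thesis using \<open>t > 0\<close> by (auto simp: dnf_clause_def intro!: exI[of _ 0])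
qed

lemma semilinear_imp_semilinear_star:
  assumes "t > 0" "finite V" "semilinear t V E"
  shows "semilinear_star (2 * t) (3 ^ t) V E"
proof -
  obtain d f \<phi> where d: "d > 0" "\<forall>x\<in>V. length x = d"
    and E: "\<forall>x\<in>V. \<forall>y\<in>V. x \<noteq> y \<longrightarrow> (E x y \<longleftrightarrow> \<phi> (sign_pattern d t f x y))"
    using assms(3) unfolding semilinear_def by blast
  have "finite ((\<lambda>(k, x, y). lin_eval d (f k) x y) ` ({..<t} \<times> V \<times> V))"
    using assms(2) by simp
  then obtain e where "e > 0"
    and gap: "\<And>a. a \<in> (\<lambda>(k, x, y). lin_eval d (f k) x y) ` ({..<t} \<times> V \<times> V) \<Longrightarrow> a \<noteq> 0 \<Longrightarrow> e \<le> \<bar>a\<bar>"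
    using finite_nonzero_abs_lower_bound by blast
  define L :: "real list list" where "L = List.n_lists t [-1, 0, 1]"
  have "length L = 3 ^ t" by (simp add: L_def length_n_lists numeral_3_eq_3)
  have "E x y \<longleftrightarrow> (\<exists>i < 3 ^ t. \<forall>j < 2 * t. lin_eval d (dnf_clause e f \<phi> (L ! i) j) x y < 0)"
    if xy: "x \<in> V" "y \<in> V" "x \<noteq> y" for x y
  proof -
    have gap_xy: "e \<le> \<bar>lin_eval d (f k) x y\<bar>" if "k < t" "lin_eval d (f k) x y \<noteq> 0" for k
      using gap[of "lin_eval d (f k) x y"] that xy by force
    have clause: "(\<forall>j < 2 * t. lin_eval d (dnf_clause e f \<phi> (L ! i) j) x y < 0)
                    \<longleftrightarrow> \<phi> (pattern_of_signs (L ! i)) \<and> sign_vector d t f x y = L ! i"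
      if "i < 3 ^ t" for i
    proof -
      have "L ! i \<in> set (List.n_lists t [-1, 0, 1])"
        using that \<open>length L = 3 ^ t\<close> by (simp add: L_def)
      from dnf_clause_iff[where d = d and f = f, OF \<open>t > 0\<close> this \<open>e > 0\<close> gap_xy]
      show ?thesis by blast
    qed
    have "E x y \<longleftrightarrow> \<phi> (pattern_of_signs (sign_vector d t f x y))"
      using E xy by (simp add: sign_pattern_eq_pattern_of_signs)
    also have "\<dots> \<longleftrightarrow> (\<exists>i < 3 ^ t. \<phi> (pattern_of_signs (L ! i)) \<and> sign_vector d t f x y = L ! i)"
    proof -
      obtain i where "i < length L" "L ! i = sign_vector d t f x y"
        using sign_vector_in_n_lists[of d t f x y] unfolding L_def[symmetric] in_set_conv_nth by blast
      then show ?thesis using \<open>length L = 3 ^ t\<close> by auto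
    qed
    also have "\<dots> \<longleftrightarrow> (\<exists>i < 3 ^ t. \<forall>j < 2 * t. lin_eval d (dnf_clause e f \<phi> (L ! i) j) x y < 0)"
      by (simp add: clause cong: conj_cong)
    finally show ?thesis .
  qed
  then show ?thesis
    unfolding semilinear_star_def using d
    by (intro exI[of _ d] conjI exI[of _ "\<lambda>i. dnf_clause e f \<phi> (L ! i)"]) simp_all
qed

theorem lemma2p1:
  fixes t :: nat
  assumes "t > 0"
  shows "\<exists>t' u :: nat. t' > 0 \<and> u > 0 \<and>
           (\<forall>(V :: real list set) E. simple_graph V E \<and> semilinear t V E \<longrightarrow>
              semilinear_star t' u V E)"
proof (intro exI conjI allI impI)
  show "2 * t > 0" using assms by simp
  show "3 ^ t > (0::nat)" by simp
  fix V :: "real list set" and E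
  assume "simple_graph V E \<and> semilinear t V E"
  then show "semilinear_star (2 * t) (3 ^ t) V E"
    using semilinear_imp_semilinear_star[OF assms] by (simp add: simple_graph_def)
qed

end
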